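(* Let $U:\mathbb{R}^d\to\mathbb{R}$ satisfy: (A1) $U$ is continuously differentiable and $\|\nabla U(x)-\nabla U(y)\|_2\le L\|x-y\|_2$ for all $x,y$, for some $L>0$; (A3) there exist $m,R>0$ such that for all $x,y\in\mathbb{R}^d$ with $\|x-y\|_2>R$, $\langle\nabla U(x)-\nabla U(y),x-y\rangle\ge m\|x-y\|_2^2$. Let $\kappa=L/m$ and $c=1000$. Let $x,y,w\in\mathbb{R}^d$, $z=x-y$, and $\nabla=\nabla U(x)-\nabla U(y)$. If $\|z\|_2^2+\|z+w\|_2^2\ge2.2R^2$, then $$\left\langle\begin{pmatrix}z\\ z+w\end{pmatrix},\begin{pmatrix}w\\ -w-\frac1{c\kappa L}\nabla\end{pmatrix}\right\rangle\le-\frac1{3(c\kappa)^2}\big(\|z\|_2^2+\|z+w\|_2^2\big).$$ *)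

theory Defs
  imports "HOL-Analysis.Analysis"
begin

end

theory Submission
  imports Defs
begin

text \<open>With \<open>q = 1/(c\<kappa>)\<close> the left-hand side equals
  \<open>-\<parallel>w\<parallel>\<^sup>2 - (q/L)\<langle>z + w, \<nabla>\<rangle>\<close>. If \<open>\<parallel>z\<parallel> > R\<close>, far-convexity makes
  \<open>-(q/L)\<langle>z, \<nabla>\<rangle> \<le> -c q\<^sup>2\<parallel>z\<parallel>\<^sup>2\<close>, which together with \<open>-\<parallel>w\<parallel>\<^sup>2\<close> absorbs the
  cross term \<open>(q/L)\<langle>w, \<nabla>\<rangle>\<close> by AM-GM. If \<open>\<parallel>z\<parallel> \<le> R\<close>, the hypothesis
  \<open>\<parallel>z\<parallel>\<^sup>2 + \<parallel>z + w\<parallel>\<^sup>2 \<ge> 2.2 R\<^sup>2\<close> forces \<open>\<parallel>z\<parallel> \<le> 11\<parallel>w\<parallel>\<close> (as \<open>1 + (12/11)\<^sup>2 < 2.2\<close>),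
  so \<open>-\<parallel>w\<parallel>\<^sup>2\<close> dominates everything, the gradient terms being only Lipschitz-bounded.\<close>

lemma inner_lipschitz_diff_le:
  fixes G :: "'a::real_inner \<Rightarrow> 'a"
  assumes lip: "\<And>u v. norm (G u - G v) \<le> L * norm (u - v)"
  shows "\<bar>inner v (G x - G y)\<bar> \<le> L * norm v * norm (x - y)"
proof -
  have "\<bar>inner v (G x - G y)\<bar> \<le> norm v * norm (G x - G y)"
    by (rule Cauchy_Schwarz_ineq2)
  also have "\<dots> \<le> norm v * (L * norm (x - y))"
    using lip by (intro mult_left_mono) auto
  finally show ?thesis by (simp add: mult_ac)
qed

lemma far_monotone_le_lipschitz:
  fixes G :: "'a::euclidean_space \<Rightarrow> 'a"
  assumes lip: "\<And>u v. norm (G u - G v) \<le> L * norm (u - v)"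
    and far: "\<And>u v. R < norm (u - v) \<Longrightarrow> m * (norm (u - v))\<^sup>2 \<le> inner (G u - G v) (u - v)"
  shows "m \<le> L"
proof -
  obtain e :: 'a where "e \<in> Basis" using nonempty_Basis by blast
  define u where "u = (\<bar>R\<bar> + 1) *\<^sub>R e"
  have norm_u: "norm u = \<bar>R\<bar> + 1"
    using \<open>e \<in> Basis\<close> by (simp add: u_def)
  have "m * (norm u)\<^sup>2 \<le> inner (G u - G 0) u"
    using far[of u 0] norm_u by simp
  also have "\<dots> \<le> L * norm u * norm u"
    using inner_lipschitz_diff_le[OF lip, of u u 0] by (simp add: inner_commute)
  finally have "m * (norm u)\<^sup>2 \<le> L * (norm u)\<^sup>2"
    by (simp add: power2_eq_square mult_ac)
  moreover have "(norm u)\<^sup>2 > 0" using norm_u by simp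
  ultimately show ?thesis by simp
qed

lemma norm_le_11_norm_if_near:
  fixes z w :: "'a::real_normed_vector"
  assumes near: "norm z \<le> R"
    and big: "2.2 * R\<^sup>2 \<le> (norm z)\<^sup>2 + (norm (z + w))\<^sup>2"
  shows "norm z \<le> 11 * norm w"
proof (rule ccontr)
  assume "\<not> ?thesis"
  then have small_w: "norm w < norm z / 11" by simp
  then have "norm z > 0" using norm_ge_zero[of w] by linarith
  have "norm (z + w) \<le> norm z + norm w" by (rule norm_triangle_ineq)
  also have "\<dots> \<le> 12/11 * norm z" using small_w by simp
  finally have "(norm (z + w))\<^sup>2 \<le> 144/121 * (norm z)\<^sup>2"
    using power_mono[of "norm (z + w)" "12/11 * norm z" 2] by (simp add: power2_eq_square)
  moreover have "(norm z)\<^sup>2 \<le> R\<^sup>2" using near by (intro power_mono) auto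
  moreover have "R > 0" using near \<open>norm z > 0\<close> by linarith
  then have "R\<^sup>2 > 0" by simp
  ultimately show False using big by linarith
qed

lemma far_regime_ineq:
  fixes q s t p :: real
  assumes q: "0 \<le> q" "q \<le> 1/1000" and "0 \<le> s" "0 \<le> t" "0 \<le> p" "p \<le> s + t"
  shows "- t\<^sup>2 - 1000 * q\<^sup>2 * s\<^sup>2 + q * s * t \<le> - (q\<^sup>2 / 3) * (s\<^sup>2 + p\<^sup>2)"
proof -
  have amgm: "q * s * t \<le> t\<^sup>2 / 2 + q\<^sup>2 * s\<^sup>2 / 2"
    using sum_squares_ge_zero[of "q * s - t" 0] by (simp add: power2_eq_square algebra_simps)
  have "p\<^sup>2 \<le> (s + t)\<^sup>2" using assms by (intro power_mono) auto
  also have "\<dots> \<le> 2 * s\<^sup>2 + 2 * t\<^sup>2"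
    using sum_squares_ge_zero[of "s - t" 0] by (simp add: power2_eq_square algebra_simps)
  finally have "q\<^sup>2 * p\<^sup>2 \<le> q\<^sup>2 * (2 * s\<^sup>2 + 2 * t\<^sup>2)"
    by (intro mult_left_mono) auto
  then have "q\<^sup>2 * p\<^sup>2 \<le> 2 * (q\<^sup>2 * s\<^sup>2) + 2 * (q\<^sup>2 * t\<^sup>2)"
    by (simp add: algebra_simps)
  moreover have "q\<^sup>2 \<le> 1/2"
    using q mult_left_mono[of q "1/1000" q] by (simp add: power2_eq_square)
  then have "q\<^sup>2 * t\<^sup>2 \<le> t\<^sup>2 / 2"
    using mult_right_mono[of "q\<^sup>2" "1/2" "t\<^sup>2"] by simp
  moreover have "- (q\<^sup>2 / 3) * (s\<^sup>2 + p\<^sup>2) = - (q\<^sup>2 * s\<^sup>2) / 3 - (q\<^sup>2 * p\<^sup>2) / 3"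
    by (simp add: algebra_simps)
  moreover have "0 \<le> q\<^sup>2 * s\<^sup>2" "0 \<le> t\<^sup>2" by simp_all
  ultimately show ?thesis using amgm unfolding mult.assoc by linarith
qed

lemma near_regime_ineq:
  fixes q s t p :: real
  assumes q: "0 \<le> q" "q \<le> 1/1000" and "0 \<le> s" "0 \<le> p" "p \<le> s + t" "s \<le> 11 * t"
  shows "- t\<^sup>2 + q * s\<^sup>2 + q * s * t \<le> - (q\<^sup>2 / 3) * (s\<^sup>2 + p\<^sup>2)"
proof -
  have "0 \<le> t" using assms by linarith
  have "s\<^sup>2 \<le> 121 * t\<^sup>2" "s * t \<le> 11 * t\<^sup>2" "s\<^sup>2 + p\<^sup>2 \<le> 265 * t\<^sup>2"
    using assms power_mono[of s "11 * t" 2] power_mono[of p "12 * t" 2]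
      mult_right_mono[of s "11 * t" t]
    by (auto simp: power2_eq_square)
  moreover have "q\<^sup>2 \<le> 1/1000000"
    using q mult_mono[of q "1/1000" q "1/1000"] by (simp add: power2_eq_square)
  ultimately have "q * s\<^sup>2 \<le> 1/1000 * (121 * t\<^sup>2)" "q * (s * t) \<le> 1/1000 * (11 * t\<^sup>2)"
      "q\<^sup>2 * (s\<^sup>2 + p\<^sup>2) \<le> 1/1000000 * (265 * t\<^sup>2)"
    using q mult_mono[of q "1/1000" "s\<^sup>2" "121 * t\<^sup>2"]
      mult_mono[of q "1/1000" "s * t" "11 * t\<^sup>2"] \<open>0 \<le> s\<close> \<open>0 \<le> t\<close> \<open>0 \<le> p\<close>
      mult_mono[of "q\<^sup>2" "1/1000000" "s\<^sup>2 + p\<^sup>2" "265 * t\<^sup>2"]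
    by auto
  moreover have "- (q\<^sup>2 / 3) * (s\<^sup>2 + p\<^sup>2) = - (q\<^sup>2 * (s\<^sup>2 + p\<^sup>2)) / 3" by simp
  ultimately show ?thesis using zero_le_power2[of t] unfolding mult.assoc by linarith
qed

lemma inner_descent_le:
  fixes G :: "'a::euclidean_space \<Rightarrow> 'a" and x y w :: 'a
  assumes lip: "\<And>u v. norm (G u - G v) \<le> L * norm (u - v)"
    and far: "\<And>u v. R < norm (u - v) \<Longrightarrow> m * (norm (u - v))\<^sup>2 \<le> inner (G u - G v) (u - v)"
    and L_pos: "0 < L" and q: "0 \<le> q" "1000 * q * L \<le> m"
    and big: "2.2 * R\<^sup>2 \<le> (norm (x - y))\<^sup>2 + (norm (x - y + w))\<^sup>2"
  shows "- (norm w)\<^sup>2 - (q / L) * inner (x - y + w) (G x - G y)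
    \<le> - (q\<^sup>2 / 3) * ((norm (x - y))\<^sup>2 + (norm (x - y + w))\<^sup>2)"
proof -
  define z g where "z = x - y" and "g = G x - G y"
  define s t p where "s = norm z" and "t = norm w" and "p = norm (z + w)"
  have norms: "0 \<le> s" "0 \<le> t" "0 \<le> p" "p \<le> s + t"
    by (simp_all add: s_def t_def p_def norm_triangle_ineq)
  have "m \<le> L" using lip far by (rule far_monotone_le_lipschitz)
  then have "1000 * q * L \<le> 1 * L" using q by simp
  then have q_small: "q \<le> 1/1000" using L_pos by (subst (asm) mult_le_cancel_right_pos) auto
  have "\<bar>inner w g\<bar> \<le> L * t * s"
    using inner_lipschitz_diff_le[OF lip] by (simp add: g_def t_def s_def z_def)
  then have cross: "- (q / L) * inner w g \<le> q * s * t"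
    using mult_left_mono[of "- inner w g" "L * t * s" "q / L"] q L_pos by (simp add: mult_ac)
  have "- (q / L) * inner (z + w) g = - (q / L) * inner z g - (q / L) * inner w g"
    by (simp add: inner_add_left algebra_simps)
  moreover have "- t\<^sup>2 - (q / L) * inner z g + q * s * t \<le> - (q\<^sup>2 / 3) * (s\<^sup>2 + p\<^sup>2)"
  proof (cases "R < s")
    case True
    have "m * s\<^sup>2 \<le> inner z g"
      using far[of x y] True by (simp add: s_def z_def g_def inner_commute)
    have "1000 * q\<^sup>2 * s\<^sup>2 = (1000 * q * L * q) * (s\<^sup>2 / L)"
      using L_pos by (simp add: power2_eq_square)
    also have "\<dots> \<le> (m * q) * (s\<^sup>2 / L)"
      using q L_pos by (intro mult_right_mono) auto
    also have "\<dots> = (q / L) * (m * s\<^sup>2)" by simp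
    also have "\<dots> \<le> (q / L) * inner z g"
      using \<open>m * s\<^sup>2 \<le> inner z g\<close> q L_pos by (intro mult_left_mono) auto
    finally show ?thesis
      using far_regime_ineq[OF q(1) q_small norms] by linarith
  next
    case False
    have "norm z \<le> 11 * norm w"
      using False big by (intro norm_le_11_norm_if_near[of z R]) (simp_all add: s_def z_def)
    moreover have "\<bar>inner z g\<bar> \<le> L * s * s"
      using inner_lipschitz_diff_le[OF lip] by (simp add: g_def s_def z_def)
    then have "- (q / L) * inner z g \<le> q * s\<^sup>2"
      using mult_left_mono[of "- inner z g" "L * s * s" "q / L"] q L_pos
      by (simp add: power2_eq_square mult_ac)
    ultimately show ?thesis
      using near_regime_ineq[OF q(1) q_small norms(1,3,4)] by (simp add: s_def t_def)
  qed
  ultimately show ?thesis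
    using cross by (simp add: z_def g_def s_def t_def p_def)
qed

theorem lemma16:
  fixes U :: "'a::euclidean_space \<Rightarrow> real"
    and gradU :: "'a \<Rightarrow> 'a"
    and L m R :: real
    and x y w :: 'a
  assumes grad: "\<And>v. (U has_derivative (\<lambda>h. gradU v \<bullet> h)) (at v)"
    and cont_grad: "continuous_on UNIV gradU"
    and L_pos: "L > 0"
    and lip: "\<And>u v. norm (gradU u - gradU v) \<le> L * norm (u - v)"
    and m_pos: "m > 0" and R_pos: "R > 0"
    and far_convex: "\<And>u v. norm (u - v) > R \<Longrightarrow>
           inner (gradU u - gradU v) (u - v) \<ge> m * (norm (u - v))\<^sup>2"
    and big: "(norm (x - y))\<^sup>2 + (norm ((x - y) + w))\<^sup>2 \<ge> 2.2 * R\<^sup>2"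
  shows "let \<kappa> = L / m; c = (1000::real); z = x - y; g = gradU x - gradU y in
           inner z w + inner (z + w) (- w - (1 / (c * \<kappa> * L)) *\<^sub>R g)
           \<le> - (1 / (3 * (c * \<kappa>)\<^sup>2)) * ((norm z)\<^sup>2 + (norm (z + w))\<^sup>2)"
proof -
  define q where "q = m / (1000 * L)"
  have coefficients: "1 / (1000 * (L / m) * L) = q / L" "1 / (3 * (1000 * (L / m))\<^sup>2) = q\<^sup>2 / 3"
    by (simp_all add: q_def power2_eq_square)
  have expand: "inner z w + inner (z + w) (- w - a *\<^sub>R g) = - (norm w)\<^sup>2 - a * inner (z + w) g"
    for z w g :: 'a and a :: real
    by (simp add: inner_add_left inner_diff_right power2_norm_eq_inner algebra_simps)
  have "- (norm w)\<^sup>2 - (q / L) * inner (x - y + w) (gradU x - gradU y)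
      \<le> - (q\<^sup>2 / 3) * ((norm (x - y))\<^sup>2 + (norm (x - y + w))\<^sup>2)"
    using L_pos m_pos big
    by (intro inner_descent_le[OF lip, of R m]) (simp_all add: far_convex q_def)
  then show ?thesis unfolding Let_def expand coefficients .
qed

end
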